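(* Let $G$ be a very well-covered graph with $2n$ vertices, $K$ a field and $S=K[x_v : v\in V(G)]$. Then $\dim(S/NI(G))\geq n$. If moreover $G$ is well-dominated, then $\dim(S/NI(G))=n$.
   Context: $G$ is very well-covered if it has no isolated vertices and every maximal independent set has exactly $|V(G)|/2$ elements. $N_G[v]$ is the closed neighborhood of $v$ and $NI(G)=\big(\prod_{w\in N_G[v]} x_w : v\in V(G)\big)$ is the closed neighborhood ideal. A dominating set is a set of vertices meeting every closed neighborhood; $G$ is well-dominated if all its minimal (with respect to inclusion) dominating sets have the same cardinality. $K$ is an infinite field. *)

theory Defs
  imports "HOL-Library.Poly_Mapping" "HOL-Library.Extended_Nat"
begin

text \<open>Polynomials in variables indexed by 'v with coefficients in 'k:
  finitely supported maps from monomials (exponent vectors, finitely supported maps to nat) to 'k.\<close>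
type_synonym ('v, 'k) mpoly = "('v \<Rightarrow>\<^sub>0 nat) \<Rightarrow>\<^sub>0 'k"

definition var :: "'v \<Rightarrow> ('v, 'k::comm_ring_1) mpoly" where
  "var v = Poly_Mapping.single (Poly_Mapping.single v 1) 1"

definition is_ideal :: "'a::comm_ring_1 set \<Rightarrow> bool" where
  "is_ideal I \<longleftrightarrow> 0 \<in> I \<and> (\<forall>a\<in>I. \<forall>b\<in>I. a + b \<in> I) \<and> (\<forall>r. \<forall>a\<in>I. r * a \<in> I)"

definition is_prime_ideal :: "'a::comm_ring_1 set \<Rightarrow> bool" where
  "is_prime_ideal P \<longleftrightarrow> is_ideal P \<and> P \<noteq> UNIV \<and> (\<forall>a b. a * b \<in> P \<longrightarrow> a \<in> P \<or> b \<in> P)"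

definition ideal_gen :: "'a::comm_ring_1 set \<Rightarrow> 'a set" where
  "ideal_gen A = \<Inter>{J. is_ideal J \<and> A \<subseteq> J}"

text \<open>Krull dimension of the quotient ring R/I: supremum of lengths n of chains
  P_0 \<subset> P_1 \<subset> ... \<subset> P_n of prime ideals of R containing I
  (these correspond bijectively to chains of primes of R/I).\<close>
definition krull_dim_quot :: "'a::comm_ring_1 set \<Rightarrow> enat" where
  "krull_dim_quot I = Sup {enat n | n. \<exists>P :: nat \<Rightarrow> 'a set.
      (\<forall>i\<le>n. is_prime_ideal (P i) \<and> I \<subseteq> P i) \<and> (\<forall>i<n. P i \<subset> P (Suc i))}"

text \<open>A finite simple graph on the vertex type 'v (all of UNIV is the vertex set),
  given by a symmetric irreflexive adjacency relation E.\<close>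
definition simple_graph :: "('v \<Rightarrow> 'v \<Rightarrow> bool) \<Rightarrow> bool" where
  "simple_graph E \<longleftrightarrow> (\<forall>u v. E u v \<longrightarrow> E v u) \<and> (\<forall>v. \<not> E v v)"

definition closed_nbhd :: "('v \<Rightarrow> 'v \<Rightarrow> bool) \<Rightarrow> 'v \<Rightarrow> 'v set" where
  "closed_nbhd E v = insert v {u. E v u}"

definition independent :: "('v \<Rightarrow> 'v \<Rightarrow> bool) \<Rightarrow> 'v set \<Rightarrow> bool" where
  "independent E A \<longleftrightarrow> (\<forall>u\<in>A. \<forall>v\<in>A. \<not> E u v)"

definition maximal_independent :: "('v \<Rightarrow> 'v \<Rightarrow> bool) \<Rightarrow> 'v set \<Rightarrow> bool" where
  "maximal_independent E A \<longleftrightarrow> independent E A \<and> (\<forall>B. independent E B \<and> A \<subseteq> B \<longrightarrow> B = A)"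

definition very_well_covered :: "('v::finite \<Rightarrow> 'v \<Rightarrow> bool) \<Rightarrow> bool" where
  "very_well_covered (E :: 'v \<Rightarrow> 'v \<Rightarrow> bool) \<longleftrightarrow> (\<forall>v. \<exists>u. E v u) \<and>
     (\<forall>A. maximal_independent E A \<longrightarrow> 2 * card A = card (UNIV :: 'v set))"

definition dominating :: "('v \<Rightarrow> 'v \<Rightarrow> bool) \<Rightarrow> 'v set \<Rightarrow> bool" where
  "dominating E D \<longleftrightarrow> (\<forall>v. D \<inter> closed_nbhd E v \<noteq> {})"

definition minimal_dominating :: "('v \<Rightarrow> 'v \<Rightarrow> bool) \<Rightarrow> 'v set \<Rightarrow> bool" where
  "minimal_dominating E D \<longleftrightarrow> dominating E D \<and> (\<forall>D'. D' \<subset> D \<longrightarrow> \<not> dominating E D')"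

definition well_dominated :: "('v::finite \<Rightarrow> 'v \<Rightarrow> bool) \<Rightarrow> bool" where
  "well_dominated E \<longleftrightarrow> (\<forall>D D'. minimal_dominating E D \<and> minimal_dominating E D' \<longrightarrow> card D = card D')"

definition NI :: "('v \<Rightarrow> 'v \<Rightarrow> bool) \<Rightarrow> ('v, 'k::comm_ring_1) mpoly set" where
  "NI E = ideal_gen {(\<Prod>w\<in>closed_nbhd E v. var w) | v. True}"

end

(*
  A maximal independent set M of G is a minimal dominating set of size n, so NI(G) lies in the
  monomial prime (x_v : v in M); adjoining the n remaining variables one at a time gives a chain
  of n + 1 primes above NI(G), hence dim(S/NI(G)) >= n.

  Conversely, a prime P containing NI(G) contains the variables of a dominating set, and if G is
  also well-dominated, every dominating set has at least n elements. Along a strict chain of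
  primes the transcendence degree of S/P (the largest number of variables algebraically
  independent modulo P) drops strictly: otherwise a maximal independent set of variables for the
  bigger prime stays maximal for the smaller one, and adjoining the remaining variables one by
  one, incomparability of primes in a simple ring extension B[z] with z algebraic modulo P forces
  the two primes to agree. Since trdeg(S/P_0) + #{v : x_v in P_0} <= 2n, every chain above NI(G)
  has length at most n.
*)
theory Submission
  imports Defs "HOL-Computational_Algebra.Polynomial" "HOL-Library.Countable"
begin

lemma is_ideal_zero: "is_ideal I \<Longrightarrow> 0 \<in> I"
  unfolding is_ideal_def by blast

lemma is_ideal_add: "is_ideal I \<Longrightarrow> a \<in> I \<Longrightarrow> b \<in> I \<Longrightarrow> a + b \<in> I"
  unfolding is_ideal_def by blast

lemma is_ideal_mult_left: "is_ideal I \<Longrightarrow> a \<in> I \<Longrightarrow> r * a \<in> I"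
  unfolding is_ideal_def by blast

lemma is_ideal_mult_right: "is_ideal I \<Longrightarrow> a \<in> I \<Longrightarrow> a * r \<in> I"
  unfolding is_ideal_def by (metis mult.commute)

lemma is_ideal_diff: "is_ideal I \<Longrightarrow> a \<in> I \<Longrightarrow> b \<in> I \<Longrightarrow> a - b \<in> I"
  using is_ideal_add[of I a "(-1) * b"] is_ideal_mult_left[of I b "-1"] by simp

lemma is_ideal_sum: "is_ideal I \<Longrightarrow> (\<And>x. x \<in> A \<Longrightarrow> f x \<in> I) \<Longrightarrow> sum f A \<in> I"
  by (induction A rule: infinite_finite_induct) (auto simp: is_ideal_zero is_ideal_add)

lemma is_prime_ideal_imp_ideal: "is_prime_ideal P \<Longrightarrow> is_ideal P"
  unfolding is_prime_ideal_def by blast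

lemma is_prime_ideal_one: "is_prime_ideal P \<Longrightarrow> 1 \<notin> P"
  unfolding is_prime_ideal_def using is_ideal_mult_left[of P 1] by auto

lemma is_prime_ideal_mult_iff: "is_prime_ideal P \<Longrightarrow> a * b \<in> P \<longleftrightarrow> a \<in> P \<or> b \<in> P"
  unfolding is_prime_ideal_def using is_ideal_mult_left is_ideal_mult_right by blast

lemma is_prime_ideal_power: "is_prime_ideal P \<Longrightarrow> a \<notin> P \<Longrightarrow> a ^ k \<notin> P"
  by (induction k) (simp_all add: is_prime_ideal_one is_prime_ideal_mult_iff)

lemma is_prime_ideal_prod:
  assumes "is_prime_ideal P"
  shows "finite A \<Longrightarrow> prod f A \<in> P \<Longrightarrow> \<exists>x\<in>A. f x \<in> P"
  by (induction A rule: finite_induct) (auto simp: assms is_prime_ideal_one is_prime_ideal_mult_iff)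

lemma ideal_gen_least: "is_ideal J \<Longrightarrow> A \<subseteq> J \<Longrightarrow> ideal_gen A \<subseteq> J"
  unfolding ideal_gen_def by blast

lemma ideal_gen_superset: "A \<subseteq> ideal_gen A"
  unfolding ideal_gen_def by blast

section \<open>Incomparability in a simple ring extension\<close>

definition subring :: "'a::comm_ring_1 set \<Rightarrow> bool" where
  "subring B \<longleftrightarrow>
     0 \<in> B \<and> 1 \<in> B \<and> (\<forall>a\<in>B. \<forall>b\<in>B. a + b \<in> B \<and> a - b \<in> B \<and> a * b \<in> B)"

lemma subring_sum: "subring B \<Longrightarrow> (\<And>x. x \<in> A \<Longrightarrow> f x \<in> B) \<Longrightarrow> sum f A \<in> B"
  by (induction A rule: infinite_finite_induct) (auto simp: subring_def)

lemma subring_power: "subring B \<Longrightarrow> a \<in> B \<Longrightarrow> a ^ k \<in> B"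
  by (induction k) (auto simp: subring_def)

definition poly_over :: "'a::comm_ring_1 set \<Rightarrow> 'a poly \<Rightarrow> bool" where
  "poly_over B p \<longleftrightarrow> (\<forall>i. coeff p i \<in> B)"

lemma poly_over_ring_ops:
  assumes "subring B" "poly_over B p" "poly_over B q" "a \<in> B"
  shows "poly_over B (p + q)" "poly_over B (p - q)" "poly_over B (p * q)"
    and "poly_over B (smult a p)" "poly_over B (monom a n)"
  using assms unfolding poly_over_def coeff_mult
  by (auto simp: subring_def coeff_monom intro!: subring_sum)

lemma lead_coeff_poly_over: "poly_over B p \<Longrightarrow> lead_coeff p \<in> B"
  unfolding poly_over_def by blast

lemma pseudo_divmod_step_degree:
  fixes f g :: "'a::comm_ring_1 poly"
  assumes "degree g \<le> degree f"
  shows "smult (lead_coeff g) f - monom (lead_coeff f) (degree f - degree g) * g = 0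
    \<or> degree (smult (lead_coeff g) f - monom (lead_coeff f) (degree f - degree g) * g) < degree f"
    (is "?f' = 0 \<or> _")
proof -
  have "degree (monom (lead_coeff f) (degree f - degree g) * g) \<le> degree f"
    using degree_mult_le[of "monom (lead_coeff f) (degree f - degree g)" g]
      degree_monom_le[of "lead_coeff f" "degree f - degree g"] assms
    by linarith
  then have "degree ?f' \<le> degree f"
    by (intro degree_diff_le order.trans[OF degree_smult_le]) simp
  moreover have "coeff ?f' (degree f) = 0"
    using assms by (simp add: coeff_monom_mult)
  ultimately show ?thesis
    by (metis le_neq_implies_less leading_coeff_0_iff)
qed

lemma pseudo_divmod_poly_over:
  assumes B: "subring B" and g: "poly_over B g" "g \<noteq> 0" and f: "poly_over B f"
  shows "\<exists>k q r. smult (lead_coeff g ^ k) f = q * g + r \<and> poly_over B q \<and> poly_over B r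
           \<and> (r = 0 \<or> degree r < degree g)"
  using f
proof (induction "if f = 0 then 0 else Suc (degree f)" arbitrary: f rule: less_induct)
  case less
  have zero: "poly_over B 0" using B by (simp add: poly_over_def subring_def)
  show ?case
  proof (cases "f = 0 \<or> degree f < degree g")
    case True
    with zero less.prems show ?thesis
      by (intro exI[of _ 0] exI[of _ 0] exI[of _ f]) auto
  next
    case False
    define m where "m = monom (lead_coeff f) (degree f - degree g)"
    define f' where "f' = smult (lead_coeff g) f - m * g"
    have lc: "lead_coeff g \<in> B" "lead_coeff f \<in> B"
      using g less.prems by (auto intro: lead_coeff_poly_over)
    have "poly_over B f'"
      unfolding f'_def m_def using B g less.prems lc by (intro poly_over_ring_ops) auto
    moreover have "(if f' = 0 then 0 else Suc (degree f')) < (if f = 0 then 0 else Suc (degree f))"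
      using False pseudo_divmod_step_degree[of g f] unfolding f'_def m_def by auto
    ultimately obtain k q r where
      qr: "smult (lead_coeff g ^ k) f' = q * g + r" "poly_over B q" "poly_over B r"
        "r = 0 \<or> degree r < degree g"
      using less.hyps by blast
    have "smult (lead_coeff g ^ Suc k) f = (q + smult (lead_coeff g ^ k) m) * g + r"
      using qr(1) unfolding f'_def by (simp add: algebra_simps smult_diff_right)
    moreover have "poly_over B (q + smult (lead_coeff g ^ k) m)"
      unfolding m_def using B qr(2) lc by (intro poly_over_ring_ops subring_power) auto
    ultimately show ?thesis
      using qr(3,4) by blast
  qed
qed

lemma poly_over_reduce_mod_ideal:
  assumes P: "is_ideal P" and B: "0 \<in> B" and p: "poly_over B p"
  shows "\<exists>p'. poly_over B p' \<and> poly p z - poly p' z \<in> P \<and> degree p' \<le> degree p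
           \<and> (p' = 0 \<or> lead_coeff p' \<notin> P)"
proof -
  define p' where "p' = map_poly (\<lambda>c. if c \<in> P then 0 else c) p"
  have coeff_p': "coeff p' i = (if coeff p i \<in> P then 0 else coeff p i)" for i
    unfolding p'_def by (rule coeff_map_poly) (simp add: is_ideal_zero[OF P])
  have "poly (p - p') z \<in> P"
    unfolding poly_altdef using P
    by (intro is_ideal_sum is_ideal_mult_right) (auto simp: coeff_p' is_ideal_zero)
  moreover have "degree p' \<le> degree p"
    by (rule degree_le) (simp add: coeff_p' coeff_eq_0)
  moreover have "p' = 0 \<or> lead_coeff p' \<notin> P"
    by (metis coeff_p' leading_coeff_0_iff)
  moreover have "poly_over B p'"
    using p B unfolding poly_over_def by (simp add: coeff_p')
  ultimately show ?thesis by auto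
qed

lemma pseudo_quotient_lead_coeff:
  fixes a :: "'a::comm_ring_1"
  assumes no_zero_divisors: "\<And>x y::'a. x * y = 0 \<Longrightarrow> x = 0 \<or> y = 0"
    and P: "is_prime_ideal P"
    and div: "smult a f = q * h + r"
    and deg_r: "degree r < degree h" and deg_h: "degree h \<le> degree f"
    and nonzero: "a \<notin> P" "lead_coeff f \<notin> P" "lead_coeff h \<notin> P"
  shows "degree q + degree h = degree f" and "lead_coeff q \<notin> P"
proof -
  have 0: "0 \<in> P" using P by (simp add: is_ideal_zero is_prime_ideal_imp_ideal)
  have qh: "q * h = smult a f - r" using div by simp
  have top: "coeff (q * h) (degree f) = a * lead_coeff f"
    unfolding qh using deg_r deg_h by (simp add: coeff_eq_0)
  then have top_notin: "coeff (q * h) (degree f) \<notin> P"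
    using nonzero P by (simp add: is_prime_ideal_mult_iff)
  then have "q \<noteq> 0" using 0 by auto
  moreover have "h \<noteq> 0" using nonzero(3) 0 by auto
  ultimately have "lead_coeff q * lead_coeff h \<noteq> 0"
    using no_zero_divisors by (metis leading_coeff_0_iff)
  then have "degree q + degree h \<le> degree (q * h)"
    by (intro le_degree) (simp add: coeff_mult_degree_sum)
  also have "degree (q * h) \<le> degree f"
    unfolding qh using deg_r deg_h by (intro degree_diff_le) (simp_all add: degree_smult_le)
  finally have "degree q + degree h \<le> degree f" .
  moreover have "degree f \<le> degree q + degree h"
    using top_notin 0 le_degree[of "q * h" "degree f"] degree_mult_le[of q h] by fastforce
  ultimately show deg_q: "degree q + degree h = degree f" by simp
  show "lead_coeff q \<notin> P"
    using top_notin P coeff_mult_degree_sum[of q h] unfolding deg_q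
    by (auto simp: is_prime_ideal_mult_iff)
qed

locale equal_contraction =
  fixes P Q B :: "'a::comm_ring_1 set"
  assumes no_zero_divisors: "\<And>x y::'a. x * y = 0 \<Longrightarrow> x = 0 \<or> y = 0"
    and prime_P: "is_prime_ideal P" and prime_Q: "is_prime_ideal Q" and P_subset_Q: "P \<subseteq> Q"
    and subring_B: "subring B" and contraction_eq: "P \<inter> B = Q \<inter> B"
begin

lemma ideal_P: "is_ideal P" and ideal_Q: "is_ideal Q" and zero_in_B: "0 \<in> B"
  using prime_P prime_Q subring_B by (simp_all add: is_prime_ideal_imp_ideal subring_def)

lemma degree_nonzero_if_lead_coeff_notin:
  assumes "poly_over B p" "poly p z \<in> Q" "lead_coeff p \<notin> P"
  shows "degree p \<noteq> 0"
proof
  assume "degree p = 0"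
  then obtain c where "p = [:c:]" using degree0_coeffs by blast
  then have "lead_coeff p \<in> Q" using assms(2) by simp
  moreover have "lead_coeff p \<in> B" using assms(1) by (rule lead_coeff_poly_over)
  ultimately show False using assms(3) contraction_eq by blast
qed

text \<open>q is the quotient of the pseudo-division of h by p.\<close>
lemma smaller_root_mod_P:
  assumes h: "poly_over B h" "poly h z \<in> P" "lead_coeff h \<notin> P"
    and p: "poly_over B p" "poly p z \<in> Q" "poly p z \<notin> P" "lead_coeff p \<notin> P"
      "degree p \<le> degree h"
    and below_p:
      "\<And>r. poly_over B r \<Longrightarrow> poly r z \<in> Q \<Longrightarrow> degree r < degree p \<Longrightarrow> poly r z \<in> P"
  obtains q where "poly_over B q" "poly q z \<in> P" "lead_coeff q \<notin> P" "degree q < degree h"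
proof -
  have "p \<noteq> 0" using p(4) is_ideal_zero[OF ideal_P] by auto
  have "degree p \<noteq> 0" using degree_nonzero_if_lead_coeff_notin p(1,2,4) .
  obtain k q r where qr: "smult (lead_coeff p ^ k) h = q * p + r" "poly_over B q"
      "poly_over B r" "r = 0 \<or> degree r < degree p"
    using pseudo_divmod_poly_over[OF subring_B p(1) \<open>p \<noteq> 0\<close> h(1)] by blast
  have deg_r: "degree r < degree p" using qr(4) \<open>degree p \<noteq> 0\<close> by auto
  have eval: "lead_coeff p ^ k * poly h z = poly q z * poly p z + poly r z"
    using arg_cong[OF qr(1), of "\<lambda>p. poly p z"] by simp
  have "poly r z = lead_coeff p ^ k * poly h z - poly q z * poly p z"
    using eval by simp
  also have "\<dots> \<in> Q"
    using h(2) P_subset_Q p(2) by (intro is_ideal_diff[OF ideal_Q] is_ideal_mult_left[OF ideal_Q]) auto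
  finally have "poly r z \<in> P" using below_p[OF qr(3) _ deg_r] by blast
  have "poly q z * poly p z = lead_coeff p ^ k * poly h z - poly r z"
    using eval by simp
  also have "\<dots> \<in> P"
    using h(2) \<open>poly r z \<in> P\<close> by (intro is_ideal_diff[OF ideal_P] is_ideal_mult_left[OF ideal_P])
  finally have "poly q z \<in> P"
    using p(3) prime_P by (simp add: is_prime_ideal_mult_iff)
  moreover have "degree q + degree p = degree h" "lead_coeff q \<notin> P"
    using pseudo_quotient_lead_coeff[OF no_zero_divisors prime_P qr(1) deg_r p(5)
        is_prime_ideal_power[OF prime_P p(4)] h(3) p(4)] by simp_all
  ultimately show ?thesis
    using that qr(2) \<open>degree p \<noteq> 0\<close> by simp
qed

lemma below_least_root_mod_P:
  assumes h: "poly_over B h" "poly h z \<in> P" "lead_coeff h \<notin> P"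
    and least:
      "\<And>q. poly_over B q \<Longrightarrow> poly q z \<in> P \<Longrightarrow> lead_coeff q \<notin> P \<Longrightarrow> degree h \<le> degree q"
  shows "poly_over B p \<Longrightarrow> poly p z \<in> Q \<Longrightarrow> degree p < degree h \<Longrightarrow> poly p z \<in> P"
proof (induction "degree p" arbitrary: p rule: less_induct)
  case less
  obtain p' where p': "poly_over B p'" "poly p z - poly p' z \<in> P" "degree p' \<le> degree p"
      "p' = 0 \<or> lead_coeff p' \<notin> P"
    using poly_over_reduce_mod_ideal[OF ideal_P zero_in_B less.prems(1), where z = z] by blast
  have "poly p' z \<in> P"
  proof (rule ccontr)
    assume "poly p' z \<notin> P"
    then have "lead_coeff p' \<notin> P" using p'(4) is_ideal_zero[OF ideal_P] by auto
    have "poly p' z = poly p z - (poly p z - poly p' z)" by simp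
    also have "\<dots> \<in> Q"
      using p'(2) by (rule is_ideal_diff[OF ideal_Q less.prems(2) subsetD[OF P_subset_Q]])
    finally obtain q where "poly_over B q" "poly q z \<in> P" "lead_coeff q \<notin> P" "degree q < degree h"
      using smaller_root_mod_P[OF h p'(1) _ \<open>poly p' z \<notin> P\<close> \<open>lead_coeff p' \<notin> P\<close>]
        less.hyps less.prems(3) p'(3) by force
    then show False using least by fastforce
  qed
  from is_ideal_add[OF ideal_P p'(2) this] show ?case by simp
qed

text \<open>Incomparability: if z is algebraic over B modulo P, then P and Q agree on B[z].\<close>
theorem incomparability_simple_extension:
  assumes g: "poly_over B g" "poly g z \<in> P" "lead_coeff g \<notin> P"
    and f: "poly_over B f" "poly f z \<in> Q"
  shows "poly f z \<in> P"
proof -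
  obtain h where h: "poly_over B h" "poly h z \<in> P" "lead_coeff h \<notin> P"
    and least:
      "\<And>q. poly_over B q \<Longrightarrow> poly q z \<in> P \<Longrightarrow> lead_coeff q \<notin> P \<Longrightarrow> degree h \<le> degree q"
    using ex_has_least_nat[of "\<lambda>p. poly_over B p \<and> poly p z \<in> P \<and> lead_coeff p \<notin> P" g degree] g
    by blast
  have "h \<noteq> 0" using h(3) is_ideal_zero[OF ideal_P] by auto
  have "degree h \<noteq> 0"
    using degree_nonzero_if_lead_coeff_notin h P_subset_Q by blast
  obtain k q r where qr: "smult (lead_coeff h ^ k) f = q * h + r" "poly_over B r"
      "r = 0 \<or> degree r < degree h"
    using pseudo_divmod_poly_over[OF subring_B h(1) \<open>h \<noteq> 0\<close> f(1)] by blast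
  have eval: "lead_coeff h ^ k * poly f z = poly q z * poly h z + poly r z"
    using arg_cong[OF qr(1), of "\<lambda>p. poly p z"] by simp
  have "poly r z = lead_coeff h ^ k * poly f z - poly q z * poly h z"
    using eval by simp
  also have "\<dots> \<in> Q"
    using f(2) h(2) P_subset_Q by (intro is_ideal_diff[OF ideal_Q] is_ideal_mult_left[OF ideal_Q]) auto
  finally have "poly r z \<in> P"
    using below_least_root_mod_P[OF h least qr(2)] qr(3) \<open>degree h \<noteq> 0\<close> by auto
  then have "lead_coeff h ^ k * poly f z \<in> P"
    using eval is_ideal_add[OF ideal_P is_ideal_mult_left[OF ideal_P h(2)]] by simp
  then show ?thesis
    using is_prime_ideal_power[OF prime_P h(3)] prime_P by (simp add: is_prime_ideal_mult_iff)
qed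

end

definition mpolys_on :: "'v set \<Rightarrow> ('v, 'k::comm_ring_1) mpoly set" where
  "mpolys_on Y = {f. \<forall>m \<in> Poly_Mapping.keys f. Poly_Mapping.keys m \<subseteq> Y}"

lemma keys_add_nat:
  "Poly_Mapping.keys ((a::'v \<Rightarrow>\<^sub>0 nat) + b) = Poly_Mapping.keys a \<union> Poly_Mapping.keys b"
  by (auto simp: in_keys_iff lookup_add)

lemma keys_mult_monomials:
  fixes f g :: "('v, 'k::comm_ring_1) mpoly"
  assumes "m \<in> Poly_Mapping.keys (f * g)"
  obtains a b where "m = a + b" "a \<in> Poly_Mapping.keys f" "b \<in> Poly_Mapping.keys g"
  using keys_mult[of f g] assms by blast

lemma subring_mpolys_on: "subring (mpolys_on Y)"
proof -
  have "f * g \<in> mpolys_on Y" if "f \<in> mpolys_on Y" "g \<in> mpolys_on Y" for f g :: "('a, 'b) mpoly"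
    using that unfolding mpolys_on_def
    by (auto elim!: keys_mult_monomials simp: keys_add_nat; blast)
  moreover have "f + g \<in> mpolys_on Y" if "f \<in> mpolys_on Y" "g \<in> mpolys_on Y" for f g :: "('a, 'b) mpoly"
    using that keys_add[of f g] unfolding mpolys_on_def by blast
  moreover have "- g \<in> mpolys_on Y" if "g \<in> mpolys_on Y" for g :: "('a, 'b) mpoly"
    using that unfolding mpolys_on_def by simp
  moreover have "0 \<in> mpolys_on Y" "1 \<in> mpolys_on Y"
    unfolding mpolys_on_def by simp_all
  ultimately show ?thesis
    unfolding subring_def by (metis diff_conv_add_uminus)
qed

lemma mpolys_on_mono: "Y \<subseteq> Y' \<Longrightarrow> mpolys_on Y \<subseteq> mpolys_on Y'"
  unfolding mpolys_on_def by blast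

lemma mpolys_on_UNIV [simp]: "mpolys_on UNIV = UNIV"
  unfolding mpolys_on_def by blast

lemma var_in_mpolys_on: "w \<in> Y \<Longrightarrow> var w \<in> mpolys_on Y"
  unfolding mpolys_on_def var_def by simp

lemma var_nonzero [simp]: "var w \<noteq> 0"
  unfolding var_def by (metis lookup_single_eq lookup_zero zero_neq_one)

lemma var_power: "var w ^ k = Poly_Mapping.single (Poly_Mapping.single w k) 1"
  by (induction k) (simp_all add: var_def mult_single flip: single_add)

lemma sum_single_lookup:
  "(\<Sum>m\<in>Poly_Mapping.keys f. Poly_Mapping.single m (Poly_Mapping.lookup f m)) = f"
proof (rule poly_mapping_eqI)
  fix k
  show "Poly_Mapping.lookup (\<Sum>m\<in>Poly_Mapping.keys f. Poly_Mapping.single m (Poly_Mapping.lookup f m)) k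
      = Poly_Mapping.lookup f k"
    by (simp add: lookup_sum lookup_single when_def in_keys_iff)
qed

lemma mpolys_on_insert_as_poly:
  assumes "f \<in> mpolys_on (insert z Y)"
  shows "\<exists>p. poly_over (mpolys_on Y) p \<and> poly p (var z) = f"
proof -
  define c where
    "c m = Poly_Mapping.single (Poly_Mapping.update z 0 m) (Poly_Mapping.lookup f m)" for m
  define p where "p = (\<Sum>m\<in>Poly_Mapping.keys f. monom (c m) (Poly_Mapping.lookup m z))"
  have "c m \<in> mpolys_on Y" if "m \<in> Poly_Mapping.keys f" for m
    using assms that unfolding mpolys_on_def c_def by (auto simp: keys_update)
  then have "poly_over (mpolys_on Y) p"
    unfolding p_def poly_over_def coeff_sum
    by (auto intro!: subring_sum[OF subring_mpolys_on]
        simp: coeff_monom subring_mpolys_on[unfolded subring_def])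
  moreover have "c m * var z ^ Poly_Mapping.lookup m z = Poly_Mapping.single m (Poly_Mapping.lookup f m)"
    for m
  proof -
    have "Poly_Mapping.update z 0 m + Poly_Mapping.single z (Poly_Mapping.lookup m z) = m"
      by (rule poly_mapping_eqI) (simp add: lookup_add lookup_update lookup_single when_def)
    then show ?thesis unfolding c_def var_power mult_single by simp
  qed
  then have "poly p (var z) = f"
    unfolding p_def poly_sum poly_monom by (simp add: sum_single_lookup)
  ultimately show ?thesis by blast
qed

lemma lookup_mult_unique_decomposition:
  fixes f g :: "'a::monoid_add \<Rightarrow>\<^sub>0 'b::semiring_0"
  assumes unique: "\<And>a b. a \<in> Poly_Mapping.keys f \<Longrightarrow> b \<in> Poly_Mapping.keys g \<Longrightarrow>
      a + b = a0 + b0 \<Longrightarrow> a = a0 \<and> b = b0"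
  shows "Poly_Mapping.lookup (f * g) (a0 + b0)
    = Poly_Mapping.lookup f a0 * Poly_Mapping.lookup g b0"
proof -
  have "Poly_Mapping.lookup f a * (\<Sum>b. Poly_Mapping.lookup g b when a0 + b0 = a + b)
      = (Poly_Mapping.lookup f a0 * Poly_Mapping.lookup g b0 when a = a0)" for a
  proof (cases "a \<in> Poly_Mapping.keys f")
    case True
    have "(\<Sum>b. Poly_Mapping.lookup g b when a0 + b0 = a + b)
        = (\<Sum>b. (Poly_Mapping.lookup g b0 when a = a0) when b = b0)"
    proof (rule Sum_any.cong)
      fix b
      show "(Poly_Mapping.lookup g b when a0 + b0 = a + b)
          = ((Poly_Mapping.lookup g b0 when a = a0) when b = b0)"
      proof (cases "b \<in> Poly_Mapping.keys g \<and> a + b = a0 + b0")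
        case True
        then have "a = a0 \<and> b = b0"
          using unique[OF \<open>a \<in> Poly_Mapping.keys f\<close>, of b] by blast
        then show ?thesis by simp
      next
        case False
        then consider "Poly_Mapping.lookup g b = 0" | "a + b \<noteq> a0 + b0"
          by (auto simp: in_keys_iff)
        then show ?thesis
          by cases (auto simp: when_def)
      qed
    qed
    then have "(\<Sum>b. Poly_Mapping.lookup g b when a0 + b0 = a + b) = (Poly_Mapping.lookup g b0 when a = a0)"
      by simp
    then show ?thesis by (cases "a = a0") simp_all
  next
    case False
    then show ?thesis by (cases "a = a0") (simp_all add: in_keys_iff)
  qed
  then show ?thesis
    by (simp add: lookup_mult)
qed

lemma poly_mapping_mult_nonzero_embedding:
  fixes f g :: "'a::monoid_add \<Rightarrow>\<^sub>0 'b::semiring_no_zero_divisors"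
    and \<iota> :: "'a \<Rightarrow> 'c::{ordered_cancel_comm_monoid_add, linorder}"
  assumes inj: "inj \<iota>" and add: "\<And>x y. \<iota> (x + y) = \<iota> x + \<iota> y"
    and "f \<noteq> 0" "g \<noteq> 0"
  shows "f * g \<noteq> 0"
proof -
  have "\<exists>a0\<in>Poly_Mapping.keys h. \<forall>a\<in>Poly_Mapping.keys h. \<iota> a \<le> \<iota> a0"
    if "h \<noteq> 0" for h :: "'a \<Rightarrow>\<^sub>0 'b"
  proof -
    have "Max (\<iota> ` Poly_Mapping.keys h) \<in> \<iota> ` Poly_Mapping.keys h"
      using that by (intro Max_in) auto
    then show ?thesis by (metis Max_ge finite_imageI finite_keys imageE image_eqI)
  qed
  then obtain a0 b0
    where a0: "a0 \<in> Poly_Mapping.keys f" "\<And>a. a \<in> Poly_Mapping.keys f \<Longrightarrow> \<iota> a \<le> \<iota> a0"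
      and b0: "b0 \<in> Poly_Mapping.keys g" "\<And>b. b \<in> Poly_Mapping.keys g \<Longrightarrow> \<iota> b \<le> \<iota> b0"
    using \<open>f \<noteq> 0\<close> \<open>g \<noteq> 0\<close> by meson
  have "a = a0 \<and> b = b0"
    if "a \<in> Poly_Mapping.keys f" "b \<in> Poly_Mapping.keys g" "a + b = a0 + b0" for a b
  proof -
    have sum: "\<iota> a + \<iota> b = \<iota> a0 + \<iota> b0" using that(3) add by metis
    have "\<iota> a = \<iota> a0"
    proof (rule ccontr)
      assume "\<iota> a \<noteq> \<iota> a0"
      then have "\<iota> a < \<iota> a0" using a0(2)[OF that(1)] by simp
      then have "\<iota> a + \<iota> b < \<iota> a0 + \<iota> b0" using b0(2)[OF that(2)] by (rule add_less_le_mono)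
      then show False using sum by simp
    qed
    moreover from this have "\<iota> b = \<iota> b0" using sum by simp
    ultimately show ?thesis using inj by (simp add: inj_eq)
  qed
  then have "Poly_Mapping.lookup (f * g) (a0 + b0) = Poly_Mapping.lookup f a0 * Poly_Mapping.lookup g b0"
    by (rule lookup_mult_unique_decomposition)
  also have "\<dots> \<noteq> 0" using a0(1) b0(1) by (simp add: in_keys_iff)
  finally show ?thesis by auto
qed

text \<open>An additive injection into monomials over nat, which are linearly ordered compatibly
  with addition; this makes the leading-monomial argument available for any countable 'v.\<close>
definition monomial_to_nat :: "('v::countable \<Rightarrow>\<^sub>0 nat) \<Rightarrow> (nat \<Rightarrow>\<^sub>0 nat)" where
  "monomial_to_nat m = Abs_poly_mapping
     (\<lambda>i. if i \<in> range (to_nat :: 'v \<Rightarrow> nat) then Poly_Mapping.lookup m (from_nat i) else 0)"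

lemma lookup_monomial_to_nat:
  fixes m :: "'v::countable \<Rightarrow>\<^sub>0 nat"
  shows "Poly_Mapping.lookup (monomial_to_nat m) i
     = (if i \<in> range (to_nat :: 'v \<Rightarrow> nat) then Poly_Mapping.lookup m (from_nat i) else 0)"
proof -
  let ?f = "\<lambda>i. if i \<in> range (to_nat :: 'v \<Rightarrow> nat) then Poly_Mapping.lookup m (from_nat i) else 0"
  have "{i. ?f i \<noteq> 0} \<subseteq> to_nat ` Poly_Mapping.keys m"
    by (auto simp: in_keys_iff)
  then have "finite {i. ?f i \<noteq> 0}"
    by (rule finite_subset) simp
  then show ?thesis unfolding monomial_to_nat_def by simp
qed

lemma mpoly_no_zero_divisors:
  fixes a b :: "('v::countable, 'k::idom) mpoly"
  assumes "a * b = 0"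
  shows "a = 0 \<or> b = 0"
proof -
  have "inj (monomial_to_nat :: ('v \<Rightarrow>\<^sub>0 nat) \<Rightarrow> _)"
  proof (rule injI, rule poly_mapping_eqI)
    fix m m' :: "'v \<Rightarrow>\<^sub>0 nat" and v
    assume "monomial_to_nat m = monomial_to_nat m'"
    then show "Poly_Mapping.lookup m v = Poly_Mapping.lookup m' v"
      by (metis lookup_monomial_to_nat from_nat_to_nat rangeI)
  qed
  moreover have "monomial_to_nat (m + m') = monomial_to_nat m + monomial_to_nat m'"
    for m m' :: "'v \<Rightarrow>\<^sub>0 nat"
    by (rule poly_mapping_eqI) (simp add: lookup_monomial_to_nat lookup_add)
  ultimately show ?thesis
    using poly_mapping_mult_nonzero_embedding[of monomial_to_nat a b] assms by blast
qed

section \<open>Transcendence degree of prime quotients\<close>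

definition alg_indep_mod :: "('v, 'k::comm_ring_1) mpoly set \<Rightarrow> 'v set \<Rightarrow> bool" where
  "alg_indep_mod P Y \<longleftrightarrow> P \<inter> mpolys_on Y \<subseteq> {0}"

lemma alg_indep_mod_empty:
  fixes P :: "('v, 'k::field) mpoly set"
  assumes P: "is_prime_ideal P"
  shows "alg_indep_mod P {}"
  unfolding alg_indep_mod_def
proof
  fix f assume f: "f \<in> P \<inter> mpolys_on {}"
  define c where "c = Poly_Mapping.lookup f 0"
  have "Poly_Mapping.keys f \<subseteq> {0}"
    using f unfolding mpolys_on_def by auto
  then have f_const: "f = Poly_Mapping.single 0 c"
    unfolding c_def by (intro poly_mapping_eqI) (auto simp: lookup_single when_def in_keys_iff)
  have "Poly_Mapping.single 0 (inverse c) * f \<in> P"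
    using f is_ideal_mult_left[OF is_prime_ideal_imp_ideal[OF P]] by blast
  then have "c = 0"
    using is_prime_ideal_one[OF P] unfolding f_const mult_single by (cases "c = 0") auto
  then show "f \<in> {0}" by (simp add: f_const)
qed

text \<open>The last hypothesis makes z algebraic over K[Y] modulo P, so incomparability applies
  to the extension K[W][z].\<close>
lemma prime_agree_on_insert:
  fixes P Q :: "('v::countable, 'k::field) mpoly set"
  assumes P: "is_prime_ideal P" and Q: "is_prime_ideal Q" and "P \<subseteq> Q"
    and agree: "P \<inter> mpolys_on W = Q \<inter> mpolys_on W"
    and "Y \<subseteq> W" and indep: "alg_indep_mod P Y" and algebraic: "\<not> alg_indep_mod P (insert z Y)"
  shows "P \<inter> mpolys_on (insert z W) = Q \<inter> mpolys_on (insert z W)"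
proof -
  interpret equal_contraction P Q "mpolys_on W"
    by (rule equal_contraction.intro)
      (fact mpoly_no_zero_divisors P Q \<open>P \<subseteq> Q\<close> subring_mpolys_on agree)+
  obtain g where g: "g \<in> P" "g \<in> mpolys_on (insert z Y)" "g \<noteq> 0"
    using algebraic unfolding alg_indep_mod_def by auto
  obtain p where p: "poly_over (mpolys_on Y) p" "poly p (var z) = g"
    using mpolys_on_insert_as_poly[OF g(2)] by blast
  have "p \<noteq> 0" using p(2) g(3) by auto
  then have lc: "lead_coeff p \<notin> P"
    using lead_coeff_poly_over[OF p(1)] indep unfolding alg_indep_mod_def by auto
  have p_W: "poly_over (mpolys_on W) p"
    using p(1) mpolys_on_mono[OF \<open>Y \<subseteq> W\<close>] unfolding poly_over_def by blast
  have "f \<in> P" if f: "f \<in> Q" "f \<in> mpolys_on (insert z W)" for f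
  proof -
    obtain q where q: "poly_over (mpolys_on W) q" "poly q (var z) = f"
      using mpolys_on_insert_as_poly[OF f(2)] by blast
    from incomparability_simple_extension[where z = "var z", OF p_W _ lc q(1)] p(2) g(1) q(2) f(1)
    show "f \<in> P" by simp
  qed
  then show ?thesis using \<open>P \<subseteq> Q\<close> by auto
qed

lemma prime_eq_if_maximal_alg_indep:
  fixes P Q :: "('v::finite, 'k::field) mpoly set"
  assumes P: "is_prime_ideal P" and Q: "is_prime_ideal Q" and "P \<subseteq> Q"
    and indep: "alg_indep_mod Q Y"
    and maximal: "\<And>z. z \<notin> Y \<Longrightarrow> \<not> alg_indep_mod P (insert z Y)"
  shows "P = Q"
proof -
  have indep_P: "alg_indep_mod P Y"
    using indep \<open>P \<subseteq> Q\<close> unfolding alg_indep_mod_def by blast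
  have "P \<inter> mpolys_on (Y \<union> D) = Q \<inter> mpolys_on (Y \<union> D)" if "finite D" for D
    using that
  proof (induction D rule: finite_induct)
    case empty
    have "0 \<in> P" "0 \<in> Q" "0 \<in> mpolys_on Y"
      using P Q by (simp_all add: is_ideal_zero is_prime_ideal_imp_ideal mpolys_on_def)
    then show ?case using indep indep_P unfolding alg_indep_mod_def by auto
  next
    case (insert z D)
    show ?case
    proof (cases "z \<in> Y \<union> D")
      case True
      then show ?thesis using insert.IH by (simp add: insert_absorb)
    next
      case False
      then show ?thesis
        using prime_agree_on_insert[OF P Q \<open>P \<subseteq> Q\<close> insert.IH Un_upper1 indep_P maximal[of z]]
        by simp
    qed
  qed
  from this[of "UNIV - Y"] show ?thesis by simp
qed

text \<open>For a prime P, this is the transcendence degree of S/P over K.\<close>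
definition trdeg :: "('v::finite, 'k::comm_ring_1) mpoly set \<Rightarrow> nat" where
  "trdeg P = Max {card Y | Y. alg_indep_mod P Y}"

lemma card_le_trdeg: "alg_indep_mod P Y \<Longrightarrow> card Y \<le> trdeg P"
  unfolding trdeg_def by (rule Max_ge) auto

lemma trdeg_attained:
  fixes P :: "('v::finite, 'k::field) mpoly set"
  assumes "is_prime_ideal P"
  obtains Y where "alg_indep_mod P Y" "card Y = trdeg P"
proof -
  have "trdeg P \<in> {card Y | Y. alg_indep_mod P Y}"
    unfolding trdeg_def using alg_indep_mod_empty[OF assms] by (intro Max_in) auto
  then show ?thesis using that by force
qed

lemma trdeg_strict_antimono:
  fixes P Q :: "('v::finite, 'k::field) mpoly set"
  assumes P: "is_prime_ideal P" and Q: "is_prime_ideal Q" and "P \<subset> Q"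
  shows "trdeg Q < trdeg P"
proof (rule ccontr)
  assume "\<not> trdeg Q < trdeg P"
  obtain Y where Y: "alg_indep_mod Q Y" "card Y = trdeg Q"
    using trdeg_attained[OF Q] by blast
  have "\<not> alg_indep_mod P (insert z Y)" if "z \<notin> Y" for z
    using card_le_trdeg[of P "insert z Y"] that Y(2) \<open>\<not> trdeg Q < trdeg P\<close> by auto
  then have "P = Q"
    using prime_eq_if_maximal_alg_indep[OF P Q _ Y(1)] \<open>P \<subset> Q\<close> by blast
  then show False using \<open>P \<subset> Q\<close> by simp
qed

lemma trdeg_add_card_vars_le:
  fixes P :: "('v::finite, 'k::field) mpoly set"
  assumes "is_prime_ideal P"
  shows "trdeg P + card {w. var w \<in> P} \<le> card (UNIV :: 'v set)"
proof -
  obtain Y where Y: "alg_indep_mod P Y" "card Y = trdeg P"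
    using trdeg_attained[OF assms] by blast
  have "Y \<inter> {w. var w \<in> P} = {}"
    using Y(1) var_in_mpolys_on[of _ Y] unfolding alg_indep_mod_def by fastforce
  then have "card Y + card {w. var w \<in> P} = card (Y \<union> {w. var w \<in> P})"
    by (simp add: card_Un_disjoint)
  also have "\<dots> \<le> card (UNIV :: 'v set)" by (rule card_mono) auto
  finally show ?thesis using Y(2) by simp
qed

lemma prime_chain_length_le:
  fixes P :: "nat \<Rightarrow> ('v::finite, 'k::field) mpoly set"
  assumes "\<forall>i\<le>k. is_prime_ideal (P i)" and "\<forall>i<k. P i \<subset> P (Suc i)"
  shows "k + card {w. var w \<in> P 0} \<le> card (UNIV :: 'v set)"
proof -
  have "trdeg (P i) + i \<le> trdeg (P 0)" if "i \<le> k" for i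
    using that
  proof (induction i)
    case (Suc i)
    then show ?case using trdeg_strict_antimono[of "P i" "P (Suc i)"] assms by simp
  qed simp
  then show ?thesis
    using trdeg_add_card_vars_le[of "P 0"] assms(1) by fastforce
qed

section \<open>Monomial primes\<close>

text \<open>The ideal (x_v : v \<in> X), described by its monomials.\<close>
definition var_ideal :: "'v set \<Rightarrow> ('v, 'k::comm_ring_1) mpoly set" where
  "var_ideal X = {f. \<forall>m\<in>Poly_Mapping.keys f. Poly_Mapping.keys m \<inter> X \<noteq> {}}"

lemma is_ideal_var_ideal: "is_ideal (var_ideal X :: ('v, 'k::comm_ring_1) mpoly set)"
  unfolding is_ideal_def
proof (intro conjI ballI allI)
  show "0 \<in> var_ideal X" unfolding var_ideal_def by simp
next
  fix a b :: "('v, 'k) mpoly" assume "a \<in> var_ideal X" "b \<in> var_ideal X"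
  then show "a + b \<in> var_ideal X"
    using keys_add[of a b] unfolding var_ideal_def by blast
next
  fix r a :: "('v, 'k) mpoly" assume "a \<in> var_ideal X"
  then show "r * a \<in> var_ideal X"
    unfolding var_ideal_def by (auto elim!: keys_mult_monomials simp: keys_add_nat; blast)
qed

lemma var_in_var_ideal_iff [simp]: "var w \<in> var_ideal X \<longleftrightarrow> w \<in> X"
  unfolding var_ideal_def var_def by simp

lemma var_ideal_mono: "X \<subseteq> X' \<Longrightarrow> var_ideal X \<subseteq> var_ideal X'"
  unfolding var_ideal_def by blast

lemma var_ideal_inter_mpolys_on_compl: "var_ideal X \<inter> mpolys_on (- X) \<subseteq> {0}"
proof
  fix f assume "f \<in> var_ideal X \<inter> mpolys_on (- X)"
  then have "Poly_Mapping.keys f = {}" unfolding var_ideal_def mpolys_on_def by blast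
  then show "f \<in> {0}" by simp
qed

lemma var_ideal_decompose:
  fixes a :: "('v, 'k::comm_ring_1) mpoly"
  obtains a1 a2 where "a = a1 + a2" "a1 \<in> mpolys_on (- X)" "a2 \<in> var_ideal X"
proof
  define S where "S = {m :: 'v \<Rightarrow>\<^sub>0 nat. Poly_Mapping.keys m \<inter> X = {}}"
  let ?part = "\<lambda>A. \<Sum>m\<in>A. Poly_Mapping.single m (Poly_Mapping.lookup a m)"
  show "a = ?part (Poly_Mapping.keys a \<inter> S) + ?part (Poly_Mapping.keys a - S)"
    by (simp add: sum.Int_Diff[symmetric] sum_single_lookup)
  show "?part (Poly_Mapping.keys a \<inter> S) \<in> mpolys_on (- X)"
    by (intro subring_sum[OF subring_mpolys_on]) (auto simp: mpolys_on_def S_def)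
  show "?part (Poly_Mapping.keys a - S) \<in> var_ideal X"
    by (intro is_ideal_sum[OF is_ideal_var_ideal]) (auto simp: var_ideal_def S_def)
qed

lemma is_prime_ideal_var_ideal:
  "is_prime_ideal (var_ideal X :: ('v::countable, 'k::field) mpoly set)"
  unfolding is_prime_ideal_def
proof (intro conjI allI impI)
  show "is_ideal (var_ideal X :: ('v, 'k) mpoly set)" by (rule is_ideal_var_ideal)
  show "(var_ideal X :: ('v, 'k) mpoly set) \<noteq> UNIV"
  proof
    assume "var_ideal X = (UNIV :: ('v, 'k) mpoly set)"
    moreover have "(1 :: ('v, 'k) mpoly) \<notin> var_ideal X" by (simp add: var_ideal_def)
    ultimately show False by simp
  qed
next
  fix a b :: "('v, 'k) mpoly"
  assume ab: "a * b \<in> var_ideal X"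
  obtain a1 a2 where a: "a = a1 + a2" "a1 \<in> mpolys_on (- X)" "a2 \<in> var_ideal X"
    by (rule var_ideal_decompose)
  obtain b1 b2 where b: "b = b1 + b2" "b1 \<in> mpolys_on (- X)" "b2 \<in> var_ideal X"
    by (rule var_ideal_decompose)
  have I: "is_ideal (var_ideal X :: ('v, 'k) mpoly set)" by (rule is_ideal_var_ideal)
  have "a1 * b1 = a * b - (a1 * b2 + a2 * b)" unfolding a(1) b(1) by (simp add: algebra_simps)
  also have "\<dots> \<in> var_ideal X"
    by (intro is_ideal_diff[OF I] ab is_ideal_add[OF I] is_ideal_mult_left[OF I]
        is_ideal_mult_right[OF I] a(3) b(3))
  finally have "a1 * b1 = 0"
    using var_ideal_inter_mpolys_on_compl subring_mpolys_on a(2) b(2) unfolding subring_def by blast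
  then have "a1 = 0 \<or> b1 = 0" by (rule mpoly_no_zero_divisors)
  then show "a \<in> var_ideal X \<or> b \<in> var_ideal X" using a b by auto
qed

section \<open>Independent and dominating sets\<close>

lemma ex_maximal_independent:
  fixes E :: "'v::finite \<Rightarrow> 'v \<Rightarrow> bool"
  obtains M where "maximal_independent E M"
proof -
  have "independent E {}" by (simp add: independent_def)
  moreover have "\<forall>A. independent E A \<longrightarrow> card A < Suc (card (UNIV :: 'v set))"
    by (simp add: card_mono le_imp_less_Suc)
  ultimately obtain M where M: "independent E M" "\<And>A. independent E A \<Longrightarrow> card A \<le> card M"
    using ex_has_greatest_nat[of "independent E" "{}" card] by blast
  have "maximal_independent E M"
    unfolding maximal_independent_def using M card_seteq[OF finite] by blast
  then show ?thesis by (rule that)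
qed

lemma maximal_independent_imp_dominating:
  assumes G: "simple_graph E" and M: "maximal_independent E M"
  shows "dominating E M"
  unfolding dominating_def
proof
  fix v
  show "M \<inter> closed_nbhd E v \<noteq> {}"
  proof
    assume empty: "M \<inter> closed_nbhd E v = {}"
    then have "independent E (insert v M)"
      using M G unfolding maximal_independent_def independent_def simple_graph_def closed_nbhd_def
      by blast
    then have "insert v M = M" using M unfolding maximal_independent_def by blast
    then show False using empty unfolding closed_nbhd_def by blast
  qed
qed

lemma maximal_independent_imp_minimal_dominating:
  assumes G: "simple_graph E" and M: "maximal_independent E M"
  shows "minimal_dominating E M"
  unfolding minimal_dominating_def
proof (intro conjI allI impI)
  show "dominating E M" using G M by (rule maximal_independent_imp_dominating)
  fix D assume "D \<subset> M"
  then obtain v where v: "v \<in> M" "v \<notin> D" by blast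
  have "D \<inter> closed_nbhd E v = {}"
    using M \<open>D \<subset> M\<close> v unfolding maximal_independent_def independent_def closed_nbhd_def by blast
  then show "\<not> dominating E D" unfolding dominating_def by blast
qed

lemma dominating_contains_minimal_dominating:
  fixes E :: "'v::finite \<Rightarrow> 'v \<Rightarrow> bool"
  assumes "dominating E D"
  obtains D' where "D' \<subseteq> D" "minimal_dominating E D'"
proof -
  obtain D' where D': "D' \<subseteq> D \<and> dominating E D'"
      "\<And>D''. D'' \<subseteq> D \<and> dominating E D'' \<Longrightarrow> card D' \<le> card D''"
    using ex_has_least_nat[of "\<lambda>D'. D' \<subseteq> D \<and> dominating E D'" D card] assms by blast
  have "minimal_dominating E D'"
    unfolding minimal_dominating_def
  proof (intro conjI allI impI notI)
    fix D'' assume "D'' \<subset> D'" "dominating E D''"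
    then have "card D' \<le> card D''" using D' by (intro D'(2)) blast
    moreover have "card D'' < card D'" using \<open>D'' \<subset> D'\<close> by (simp add: psubset_card_mono)
    ultimately show False by simp
  qed (use D' in blast)
  with D' show ?thesis using that by blast
qed

lemma card_dominating_ge:
  fixes E :: "'v::finite \<Rightarrow> 'v \<Rightarrow> bool"
  assumes G: "simple_graph E" and "very_well_covered E" and "well_dominated E"
    and "card (UNIV :: 'v set) = 2 * n" and "dominating E D"
  shows "n \<le> card D"
proof -
  obtain M where M: "maximal_independent E M" by (rule ex_maximal_independent)
  obtain D' where "D' \<subseteq> D" "minimal_dominating E D'"
    using dominating_contains_minimal_dominating[OF \<open>dominating E D\<close>] by blast
  then have "card M = card D'"
    using \<open>well_dominated E\<close> maximal_independent_imp_minimal_dominating[OF G M]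
    unfolding well_dominated_def by blast
  moreover have "2 * card M = 2 * n"
    using \<open>very_well_covered E\<close> M assms(4) unfolding very_well_covered_def by auto
  ultimately show ?thesis using card_mono[OF _ \<open>D' \<subseteq> D\<close>] by simp
qed

lemma dominating_vars_of_prime_over_NI:
  fixes P :: "('v::finite, 'k::field) mpoly set"
  assumes P: "is_prime_ideal P" and "NI E \<subseteq> P"
  shows "dominating E {w. var w \<in> P}"
  unfolding dominating_def
proof
  fix v
  have "(\<Prod>w\<in>closed_nbhd E v. var w) \<in> NI E"
    unfolding NI_def by (rule subsetD[OF ideal_gen_superset]) blast
  then have "(\<Prod>w\<in>closed_nbhd E v. var w) \<in> P" using \<open>NI E \<subseteq> P\<close> by blast
  then obtain w where "w \<in> closed_nbhd E v" "var w \<in> P"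
    using is_prime_ideal_prod[OF P finite] by blast
  then show "{w. var w \<in> P} \<inter> closed_nbhd E v \<noteq> {}" by blast
qed

lemma NI_subset_var_ideal:
  fixes E :: "'v::finite \<Rightarrow> 'v \<Rightarrow> bool"
  assumes "dominating E X"
  shows "(NI E :: ('v, 'k::comm_ring_1) mpoly set) \<subseteq> var_ideal X"
  unfolding NI_def
proof (rule ideal_gen_least[OF is_ideal_var_ideal], safe)
  fix v
  obtain w where w: "w \<in> X" "w \<in> closed_nbhd E v"
    using assms unfolding dominating_def by blast
  have "(\<Prod>u\<in>closed_nbhd E v. var u) = var w * (\<Prod>u\<in>closed_nbhd E v - {w}. var u)"
    using w(2) by (simp add: prod.remove)
  also have "\<dots> \<in> (var_ideal X :: ('v, 'k) mpoly set)"
    using w(1) by (intro is_ideal_mult_right[OF is_ideal_var_ideal]) simp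
  finally show "(\<Prod>u\<in>closed_nbhd E v. var u) \<in> (var_ideal X :: ('v, 'k) mpoly set)" .
qed

lemma krull_dim_quot_ge_chain:
  fixes I :: "'a::comm_ring_1 set" and P :: "nat \<Rightarrow> 'a set"
  assumes "\<And>i. i \<le> n \<Longrightarrow> is_prime_ideal (P i) \<and> I \<subseteq> P i"
    and "\<And>i. i < n \<Longrightarrow> P i \<subset> P (Suc i)"
  shows "enat n \<le> krull_dim_quot I"
  unfolding krull_dim_quot_def using assms by (intro Sup_upper) blast

lemma krull_dim_quot_NI_ge:
  fixes E :: "'v::finite \<Rightarrow> 'v \<Rightarrow> bool"
  assumes "dominating E M"
  shows "enat (card (- M)) \<le> krull_dim_quot (NI E :: ('v, 'k::field) mpoly set)"
proof -
  obtain xs where xs: "set xs = - M" "distinct xs"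
    using finite_distinct_list[OF finite[of "- M"]] by blast
  define P :: "nat \<Rightarrow> ('v, 'k) mpoly set" where "P i = var_ideal (M \<union> set (take i xs))" for i
  have "card (- M) = length xs" using xs by (metis distinct_card)
  moreover have "enat (length xs) \<le> krull_dim_quot (NI E :: ('v, 'k) mpoly set)"
  proof (rule krull_dim_quot_ge_chain)
    fix i
    have "dominating E (M \<union> set (take i xs))"
      using assms unfolding dominating_def by blast
    then show "is_prime_ideal (P i) \<and> NI E \<subseteq> P i"
      unfolding P_def by (simp add: is_prime_ideal_var_ideal NI_subset_var_ideal)
  next
    fix i assume "i < length xs"
    then have take_Suc: "take (Suc i) xs = take i xs @ [xs ! i]"
      by (rule take_Suc_conv_app_nth)
    then have "xs ! i \<notin> set (take i xs)"
      using distinct_take[OF xs(2), of "Suc i"] by simp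
    moreover have "xs ! i \<notin> M" using xs(1) \<open>i < length xs\<close> nth_mem by blast
    ultimately have "var (xs ! i) \<in> P (Suc i) - P i"
      unfolding P_def take_Suc by simp
    moreover have "P i \<subseteq> P (Suc i)"
      unfolding P_def take_Suc by (intro var_ideal_mono) auto
    ultimately show "P i \<subset> P (Suc i)" by blast
  qed
  ultimately show ?thesis by simp
qed

lemma krull_dim_quot_NI_le:
  fixes E :: "'v::finite \<Rightarrow> 'v \<Rightarrow> bool"
  assumes "\<And>D. dominating E D \<Longrightarrow> m \<le> card D"
  shows "krull_dim_quot (NI E :: ('v, 'k::field) mpoly set) \<le> enat (card (UNIV :: 'v set) - m)"
  unfolding krull_dim_quot_def
proof (rule Sup_least)
  fix x
  assume "x \<in> {enat k | k. \<exists>P :: nat \<Rightarrow> ('v, 'k) mpoly set.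
      (\<forall>i\<le>k. is_prime_ideal (P i) \<and> NI E \<subseteq> P i) \<and> (\<forall>i<k. P i \<subset> P (Suc i))}"
  then obtain k and P :: "nat \<Rightarrow> ('v, 'k) mpoly set" where x: "x = enat k"
    and chain: "\<forall>i\<le>k. is_prime_ideal (P i) \<and> NI E \<subseteq> P i" "\<forall>i<k. P i \<subset> P (Suc i)"
    by blast
  have "k + card {w. var w \<in> P 0} \<le> card (UNIV :: 'v set)"
    using chain by (intro prime_chain_length_le) simp_all
  moreover have "m \<le> card {w. var w \<in> P 0}"
    using chain(1) by (intro assms dominating_vars_of_prime_over_NI) simp_all
  ultimately show "x \<le> enat (card (UNIV :: 'v set) - m)"
    unfolding x by simp
qed

theorem lemma4p3:
  fixes E :: "'v::finite \<Rightarrow> 'v \<Rightarrow> bool" and n :: nat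
  assumes "simple_graph E"
    and "very_well_covered E"
    and "card (UNIV :: 'v set) = 2 * n"
    and "infinite (UNIV :: 'k::field set)"
  shows "krull_dim_quot (NI E :: ('v, 'k) mpoly set) \<ge> enat n
         \<and> (well_dominated E \<longrightarrow> krull_dim_quot (NI E :: ('v, 'k) mpoly set) = enat n)"
proof -
  obtain M where M: "maximal_independent E M" by (rule ex_maximal_independent)
  have "2 * card M = 2 * n"
    using assms(2,3) M unfolding very_well_covered_def by auto
  then have "card (- M) = n"
    using assms(3) by (simp add: Compl_eq_Diff_UNIV card_Diff_subset)
  then have lower: "enat n \<le> krull_dim_quot (NI E :: ('v, 'k) mpoly set)"
    using krull_dim_quot_NI_ge[OF maximal_independent_imp_dominating[OF assms(1) M]] by simp
  have "krull_dim_quot (NI E :: ('v, 'k) mpoly set) \<le> enat n" if "well_dominated E"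
    using krull_dim_quot_NI_le[of E n] card_dominating_ge[OF assms(1,2) that assms(3)] assms(3)
    by simp
  with lower show ?thesis by (auto intro: antisym)
qed

end
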